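(* Let $s\in(0,1)$ and suppose the jump kernels $j_2^{(n)}$ satisfy the upper bound with this $s$. If $u\in C^{1/2}([0,1])$, then $\widetilde{\mathcal{E}}_2^{(\infty)}(u)=\mathcal{E}_2^{(\infty)}(u)$.
   Context: Index graph: vertices $\mathbb{N}$; vertex $i$ has edges $e_{i,2i-2}$ to $2i-2$ (only if $i\ge2$), $e_{i,2i-1},e'_{i,2i-1}$ to $2i-1$, $e_{i,2i}$ to $2i$, weights $r_e>0$ with $r_{e_{i,2i-1}}=r_{e'_{i,2i-1}}$. For $e$ from $i$ to $j$, $\phi_e(x)=\frac{j}{2i}x+s_e$, $s_e=0$ for $e\in\{e_{i,2i-1},e_{i,2i}\}$, $s_e=\frac1{2i}$ for $e\in\{e_{i,2i-2},e'_{i,2i-1}\}$. $E_2^{(n)}$: paths $\sigma=e_1\cdots e_n$ of length $n$ from vertex $2$; $\phi_\sigma=\phi_{e_1}\circ\cdots\circ\phi_{e_n}$, $\delta_\sigma=r_{e_1}\cdots r_{e_n}$. $V_{2-}^{(n)}=\{k/2^{n+1}\}_{k=0}^{2^n-1}$, $V_{2+}^{(n)}=\{1-k/2^{n+1}\}_{k=0}^{2^n-1}$, $V_2^{(n)}=V_{2-}^{(n)}\cup V_{2+}^{(n)}$. The wires $\{\phi_\sigma(0),\phi_\sigma(1)\}$, $\sigma\in E_2^{(n)}$, are all pairs $\{x,y\}$ with $x\in V_{2-}^{(n)}$, $y\in V_{2+}^{(n)}$, each with a unique path $\sigma^{(n)}_{x,y}$. $U_2^{(n)}(x)=[x,x+2^{-n-1})$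 for $x<\frac12$, $(x-2^{-n-1},x]$ for $x>\frac12$; $\mu_2^{(n)}(x)=2^{-n-1}$. Kernel $j_2^{(n)}(x,y)=(\delta_{\sigma^{(n)}_{x,y}}\mu_2^{(n)}(x)\mu_2^{(n)}(y))^{-1}$ on wires, $0$ otherwise. $\mathcal{E}_2^{(n)}(u)=\sum_{x,y\in V_2^{(n)}}(u(x)-u(y))^2j_2^{(n)}(x,y)\mu_2^{(n)}(x)\mu_2^{(n)}(y)$. Upper bound: there is $\Lambda_2>0$ with $0<j_2^{(n)}(x,y)\le\Lambda_2|x-y|^{-1-2s}$ for all $n\ge0$ and wires $\{x,y\}$. $\mathcal{E}_2^{(\infty)}(u)=\lim_n\mathcal{E}_2^{(n)}(u|_{V_2^{(n)}})$; $\operatorname{Avg}_2^{(n)}u(\bar x)=\frac1{|U_2^{(n)}(\bar x)|}\int_{U_2^{(n)}(\bar x)}u\,dx$; $\widetilde{\mathcal{E}}_2^{(\infty)}(u)=\lim_n\mathcal{E}_2^{(n)}(\operatorname{Avg}_2^{(n)}u)$. *)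

theory Defs
  imports "HOL-Analysis.Analysis"
begin

text \<open>Edges of the index graph: (i, k) with source vertex i and kind k:
  k = 0: e_{i,2i-2} (only i \<ge> 2), k = 1: e_{i,2i-1}, k = 2: e'_{i,2i-1}, k = 3: e_{i,2i}.\<close>
type_synonym edge = "nat \<times> nat"

definition valid_edge :: "edge \<Rightarrow> bool" where
  "valid_edge e = (fst e \<ge> 1 \<and> snd e \<le> 3 \<and> (snd e = 0 \<longrightarrow> fst e \<ge> 2))"

definition esrc :: "edge \<Rightarrow> nat" where "esrc e = fst e"

definition etgt :: "edge \<Rightarrow> nat" where
  "etgt e = (if snd e = 0 then 2 * fst e - 2
             else if snd e = 1 \<or> snd e = 2 then 2 * fst e - 1
             else 2 * fst e)"

definition eshift :: "edge \<Rightarrow> real" where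
  "eshift e = (if snd e = 0 \<or> snd e = 2 then 1 / (2 * real (fst e)) else 0)"

definition phi_e :: "edge \<Rightarrow> real \<Rightarrow> real" where
  "phi_e e x = real (etgt e) / (2 * real (esrc e)) * x + eshift e"

fun is_path :: "nat \<Rightarrow> edge list \<Rightarrow> bool" where
  "is_path v [] = True"
| "is_path v (e # es) = (valid_edge e \<and> esrc e = v \<and> is_path (etgt e) es)"

definition E2 :: "nat \<Rightarrow> edge list set" where
  "E2 n = {\<sigma>. length \<sigma> = n \<and> is_path 2 \<sigma>}"

definition phi_path :: "edge list \<Rightarrow> real \<Rightarrow> real" where
  "phi_path \<sigma> = foldr (\<lambda>e f. phi_e e \<circ> f) \<sigma> id"

definition delta :: "(edge \<Rightarrow> real) \<Rightarrow> edge list \<Rightarrow> real" where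
  "delta r \<sigma> = prod_list (map r \<sigma>)"

definition V2minus :: "nat \<Rightarrow> real set" where
  "V2minus n = {real k / 2 ^ (n + 1) | k. k < 2 ^ n}"

definition V2plus :: "nat \<Rightarrow> real set" where
  "V2plus n = {1 - real k / 2 ^ (n + 1) | k. k < 2 ^ n}"

definition V2 :: "nat \<Rightarrow> real set" where
  "V2 n = V2minus n \<union> V2plus n"

definition U2 :: "nat \<Rightarrow> real \<Rightarrow> real set" where
  "U2 n x = (if x < 1 / 2 then {x ..< x + 1 / 2 ^ (n + 1)} else {x - 1 / 2 ^ (n + 1) <.. x})"

definition mu2 :: "nat \<Rightarrow> real \<Rightarrow> real" where
  "mu2 n x = 1 / 2 ^ (n + 1)"

definition is_wire :: "nat \<Rightarrow> real \<Rightarrow> real \<Rightarrow> bool" where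
  "is_wire n x y = (\<exists>\<sigma>\<in>E2 n. {phi_path \<sigma> 0, phi_path \<sigma> 1} = {x, y})"

definition wire_path :: "nat \<Rightarrow> real \<Rightarrow> real \<Rightarrow> edge list" where
  "wire_path n x y = (THE \<sigma>. \<sigma> \<in> E2 n \<and> {phi_path \<sigma> 0, phi_path \<sigma> 1} = {x, y})"

definition j2 :: "(edge \<Rightarrow> real) \<Rightarrow> nat \<Rightarrow> real \<Rightarrow> real \<Rightarrow> real" where
  "j2 r n x y = (if is_wire n x y
                 then 1 / (delta r (wire_path n x y) * mu2 n x * mu2 n y) else 0)"

definition energy2 :: "(edge \<Rightarrow> real) \<Rightarrow> nat \<Rightarrow> (real \<Rightarrow> real) \<Rightarrow> real" where
  "energy2 r n v = (\<Sum>x\<in>V2 n. \<Sum>y\<in>V2 n. (v x - v y)\<^sup>2 * j2 r n x y * mu2 n x * mu2 n y)"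

definition avg2 :: "nat \<Rightarrow> (real \<Rightarrow> real) \<Rightarrow> real \<Rightarrow> real" where
  "avg2 n u x = integral (U2 n x) u / measure lebesgue (U2 n x)"

definition upper_bound :: "(edge \<Rightarrow> real) \<Rightarrow> real \<Rightarrow> bool" where
  "upper_bound r s = (\<exists>\<Lambda>>0. \<forall>n x y. is_wire n x y \<longrightarrow>
       0 < j2 r n x y \<and> j2 r n x y \<le> \<Lambda> * \<bar>x - y\<bar> powr (- 1 - 2 * s))"

definition holder_half_01 :: "(real \<Rightarrow> real) \<Rightarrow> bool" where
  "holder_half_01 u = (\<exists>C. \<forall>x\<in>{0..1}. \<forall>y\<in>{0..1}. \<bar>u x - u y\<bar> \<le> C * \<bar>x - y\<bar> powr (1 / 2))"

end

(* Write h = 2^-(n+1) for the cell size.  On each cell the average of a 1/2-Hoelder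
   function u differs from its value at the vertex by at most C sqrt h.  Every wire
   {x, y} crosses the midpoint, so with p = |x - 1/2| and q = |y - 1/2| we have
   |x - y| = p + q >= h, and replacing u by its cell averages changes the wire's
   contribution by at most 8 C^2 sqrt (h (p + q)) j h^2.  The kernel bound
   j <= Lambda (p + q)^(-1-2s) and sqrt (p + q) (p + q)^(-1-2s) <= (p q)^(-1/4-s)
   factor this over the two endpoints, so the two energies differ by at most
   8 C^2 Lambda h^(5/2) (sum_x |x - 1/2|^(-gamma))^2 for any gamma >= 1/4 + s.
   The distances |x - 1/2| are exactly the multiples j h, 1 <= j <= 2^n, on either
   side of 1/2, so the sum is at most 2 zeta(gamma) h^(-gamma).  Choosing
   1 < gamma < 5/4 (possible because s < 1) gives a bound h^(5/2 - 2 gamma) -> 0. *)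

theory Submission
  imports Defs
begin

lemma integral_between_intervals:
  fixes f :: "real \<Rightarrow> real"
  assumes "{a<..<b} \<subseteq> S" "S \<subseteq> {a..b}"
  shows "integral S f = integral {a..b} f"
proof (rule integral_spike_set)
  have "{a..b} - S \<subseteq> {a..b} - {a<..<b}" using assms(1) by blast
  also have "\<dots> \<subseteq> {a, b}" by (cases "a \<le> b") auto
  finally show "negligible {x \<in> {a..b} - S. f x \<noteq> 0}"
    by (rule negligible_subset[rotated, OF subset_trans[rotated]]) auto
  have "{x \<in> S - {a..b}. f x \<noteq> 0} = {}" using assms(2) by (auto simp: subset_iff)
  then show "negligible {x \<in> S - {a..b}. f x \<noteq> 0}" by (simp only: negligible_empty)
qed

lemma measure_between_intervals:
  fixes a b :: real
  assumes "a \<le> b" "{a<..<b} \<subseteq> S" "S \<subseteq> {a..b}"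
  shows "measure lebesgue S = b - a"
proof -
  have "S - {a<..<b} \<subseteq> {a, b}" using assms by (auto simp: subset_iff)
  then have "S - {a<..<b} \<in> null_sets lebesgue"
    unfolding negligible_iff_null_sets[symmetric] by (rule negligible_subset[rotated]) simp
  then have "measure lebesgue ({a<..<b} \<union> (S - {a<..<b})) = measure lebesgue {a<..<b}"
    by (intro measure_Un_null_set) simp_all
  moreover have "{a<..<b} \<union> (S - {a<..<b}) = S" using assms by blast
  ultimately show ?thesis using assms by simp
qed

lemma average_near_value:
  fixes f :: "real \<Rightarrow> real"
  assumes ab: "a < b" and S: "{a<..<b} \<subseteq> S" "S \<subseteq> {a..b}"
    and f: "continuous_on {a..b} f" "\<And>t. t \<in> {a..b} \<Longrightarrow> \<bar>f t - c\<bar> \<le> K"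
  shows "\<bar>integral S f / measure lebesgue S - c\<bar> \<le> K"
proof -
  have "norm (integral {a..b} (\<lambda>t. f t - c)) \<le> K * (b - a)"
  proof (rule integral_bound)
    show "continuous_on {a..b} (\<lambda>t. f t - c)"
      by (intro continuous_on_diff f(1) continuous_on_const)
  qed (use ab f(2) in auto)
  moreover have "integral {a..b} (\<lambda>t. f t - c) = integral S f - c * (b - a)"
    using ab integral_between_intervals[OF S, of f]
    by (simp add: integral_diff[OF integrable_continuous_real[OF f(1)] integrable_const_ivl])
  ultimately have bound: "\<bar>integral S f - c * (b - a)\<bar> \<le> K * (b - a)" by simp
  have "integral S f / measure lebesgue S - c = (integral S f - c * (b - a)) / (b - a)"
    using ab measure_between_intervals[OF _ S] by (simp add: diff_divide_distrib)
  also have "\<bar>\<dots>\<bar> \<le> K"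
    using ab bound by (simp add: abs_div pos_divide_le_eq)
  finally show ?thesis .
qed

lemma holder_sqrt_continuous_on:
  fixes u :: "real \<Rightarrow> real"
  assumes "\<forall>x\<in>S. \<forall>y\<in>S. \<bar>u x - u y\<bar> \<le> C * sqrt \<bar>x - y\<bar>"
  shows "continuous_on S u"
  unfolding continuous_on_def
proof
  fix x assume x: "x \<in> S"
  have "((\<lambda>y. C * sqrt \<bar>y - x\<bar>) \<longlongrightarrow> C * sqrt \<bar>x - x\<bar>) (at x within S)"
    by (intro tendsto_intros)
  then have "((\<lambda>y. C * sqrt \<bar>y - x\<bar>) \<longlongrightarrow> 0) (at x within S)" by simp
  moreover have "\<forall>\<^sub>F y in at x within S. norm (u y - u x) \<le> C * sqrt \<bar>y - x\<bar>"
    unfolding eventually_at_filter using assms x by (intro always_eventually) simp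
  ultimately have "((\<lambda>y. u y - u x) \<longlongrightarrow> 0) (at x within S)"
    by (rule Lim_null_comparison[rotated])
  then show "(u \<longlongrightarrow> u x) (at x within S)" by (simp add: LIM_zero_iff)
qed

lemma abs_diff_squares_le:
  fixes ax ay ux uy C h d :: real
  assumes C: "0 \<le> C" and h: "0 \<le> h" "h \<le> d"
    and ax: "\<bar>ax - ux\<bar> \<le> C * sqrt h" and ay: "\<bar>ay - uy\<bar> \<le> C * sqrt h"
    and u: "\<bar>ux - uy\<bar> \<le> C * sqrt d"
  shows "\<bar>(ax - ay)\<^sup>2 - (ux - uy)\<^sup>2\<bar> \<le> 8 * C\<^sup>2 * sqrt h * sqrt d"
proof -
  have "C * sqrt h \<le> C * sqrt d" using C h by (intro mult_left_mono) auto
  then have diff: "\<bar>(ax - ux) - (ay - uy)\<bar> \<le> 2 * C * sqrt h"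
    and sum: "\<bar>(ax - ay) + (ux - uy)\<bar> \<le> 4 * C * sqrt d"
    using ax ay u by linarith+
  have "(ax - ay)\<^sup>2 - (ux - uy)\<^sup>2 = ((ax - ux) - (ay - uy)) * ((ax - ay) + (ux - uy))"
    by (simp add: power2_eq_square algebra_simps)
  then have "\<bar>(ax - ay)\<^sup>2 - (ux - uy)\<^sup>2\<bar> = \<bar>(ax - ux) - (ay - uy)\<bar> * \<bar>(ax - ay) + (ux - uy)\<bar>"
    by (simp add: abs_mult)
  also have "\<dots> \<le> (2 * C * sqrt h) * (4 * C * sqrt d)"
    using diff sum C by (intro mult_mono) auto
  also have "\<dots> = 8 * C\<^sup>2 * sqrt h * sqrt d" by (simp add: power2_eq_square)
  finally show ?thesis .
qed

lemma sqrt_sum_powr_le: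
  fixes p q s :: real
  assumes p: "0 < p" and q: "0 < q" and s: "0 \<le> s"
  shows "sqrt (p + q) * (p + q) powr (-1 - 2 * s) \<le> p powr -(1/4 + s) * q powr -(1/4 + s)"
proof -
  have pq: "0 < p + q" using p q by simp
  have "sqrt (p + q) * (p + q) powr (-1 - 2 * s) = (p + q) powr (1/2) * (p + q) powr (-1 - 2 * s)"
    using pq by (simp add: powr_half_sqrt)
  also have "\<dots> = (p + q) powr (1/2 + (-1 - 2 * s))"
    by (rule powr_add[symmetric])
  also have "\<dots> = ((p + q) powr 2) powr -(1/4 + s)"
    by (simp add: powr_powr)
  also have "\<dots> = ((p + q)\<^sup>2) powr -(1/4 + s)"
    using pq by (subst powr_numeral) auto
  also have "\<dots> \<le> (p * q) powr -(1/4 + s)"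
  proof (rule powr_mono2')
    have "0 \<le> p * p + p * q + q * q" using p q by (simp add: add_nonneg_nonneg)
    then show "p * q \<le> (p + q)\<^sup>2" by (simp add: power2_eq_square algebra_simps)
  qed (use p q s in auto)
  also have "\<dots> = p powr -(1/4 + s) * q powr -(1/4 + s)"
    using p q by (simp add: powr_mult)
  finally show ?thesis .
qed

lemma power2_sqrt_powr_square:
  fixes h \<gamma> :: real
  assumes "0 < h"
  shows "h\<^sup>2 * sqrt h * (h powr -\<gamma>)\<^sup>2 = h powr (5/2 - 2 * \<gamma>)"
proof -
  have "h powr (5/2 - 2 * \<gamma>) = h powr 2 * h powr (1/2) * (h powr -\<gamma> * h powr -\<gamma>)"
    by (simp add: powr_add[symmetric])
  then show ?thesis
    using assms by (simp add: powr_half_sqrt power2_eq_square powr_numeral)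
qed

lemma abs_double_sum_le_square:
  fixes T :: "'a \<Rightarrow> 'a \<Rightarrow> real"
  assumes "\<And>x y. x \<in> S \<Longrightarrow> y \<in> S \<Longrightarrow> \<bar>T x y\<bar> \<le> K * (g x * g y)"
  shows "\<bar>\<Sum>x\<in>S. \<Sum>y\<in>S. T x y\<bar> \<le> K * (sum g S)\<^sup>2"
proof -
  have "\<bar>\<Sum>x\<in>S. \<Sum>y\<in>S. T x y\<bar> \<le> (\<Sum>x\<in>S. \<Sum>y\<in>S. \<bar>T x y\<bar>)"
    by (rule order_trans[OF sum_abs sum_mono]) (rule sum_abs)
  also have "\<dots> \<le> (\<Sum>x\<in>S. \<Sum>y\<in>S. K * (g x * g y))"
    by (intro sum_mono assms)
  also have "\<dots> = K * (\<Sum>x\<in>S. \<Sum>y\<in>S. g x * g y)"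
    by (simp add: sum_distrib_left)
  also have "\<dots> = K * (sum g S)\<^sup>2"
    by (simp only: power2_eq_square sum_product)
  finally show ?thesis .
qed

lemma tendsto_ereal_shift_null:
  fixes A B :: "nat \<Rightarrow> real" and L :: ereal
  assumes "(\<lambda>n. ereal (A n)) \<longlonglongrightarrow> L" and "(\<lambda>n. B n - A n) \<longlonglongrightarrow> 0"
  shows "(\<lambda>n. ereal (B n)) \<longlonglongrightarrow> L"
proof -
  have "(\<lambda>n. ereal (A n) + ereal (B n - A n)) \<longlonglongrightarrow> L + ereal 0"
    using assms by (intro tendsto_add_ereal_general tendsto_ereal) auto
  then show ?thesis by (simp add: zero_ereal_def[symmetric])
qed

lemma tendsto_ereal_iff_of_diff_null:
  fixes A B :: "nat \<Rightarrow> real"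
  assumes "(\<lambda>n. A n - B n) \<longlonglongrightarrow> 0"
  shows "\<forall>L :: ereal. ((\<lambda>n. ereal (A n)) \<longlonglongrightarrow> L) \<longleftrightarrow> ((\<lambda>n. ereal (B n)) \<longlonglongrightarrow> L)"
proof -
  have "(\<lambda>n. B n - A n) \<longlonglongrightarrow> 0" using tendsto_minus[OF assms] by simp
  then show ?thesis using assms by (blast intro: tendsto_ereal_shift_null)
qed

lemma phi_path_Cons: "phi_path (e # \<sigma>) = phi_e e \<circ> phi_path \<sigma>"
  by (simp add: phi_path_def)

lemma phi_e_affine:
  "phi_e e y = phi_e e 0 + real (etgt e) / (2 * real (esrc e)) * y"
  "phi_e e y = phi_e e 1 - real (etgt e) / (2 * real (esrc e)) * (1 - y)"
  by (simp_all add: phi_e_def right_diff_distrib)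

lemma phi_e_endpoints:
  assumes "valid_edge e"
  shows "phi_e e 0 \<le> 1 / (2 * real (esrc e))" "1 - 1 / (2 * real (esrc e)) \<le> phi_e e 1"
  using assms by (auto simp: phi_e_def eshift_def etgt_def esrc_def valid_edge_def field_simps)

lemma phi_path_endpoints:
  "is_path i \<sigma> \<Longrightarrow> 1 \<le> i \<Longrightarrow> phi_path \<sigma> 0 < 1 / real i \<and> 1 - 1 / real i < phi_path \<sigma> 1"
proof (induction \<sigma> arbitrary: i)
  case Nil
  then show ?case by (simp add: phi_path_def)
next
  case (Cons e \<sigma>)
  define j where "j = etgt e"
  define c where "c = real j / (2 * real i)"
  have e: "valid_edge e" "esrc e = i" "is_path j \<sigma>"
    using Cons.prems by (auto simp: j_def)
  have j: "1 \<le> j" using e(1) by (auto simp: j_def etgt_def valid_edge_def)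
  have i: "real i > 0" using Cons.prems by simp
  have c: "c > 0" "c * (1 / real j) = 1 / (2 * real i)"
    using i j by (simp_all add: c_def)
  obtain IH0: "phi_path \<sigma> 0 < 1 / real j" and IH1: "1 - phi_path \<sigma> 1 < 1 / real j"
    using Cons.IH[OF e(3) j] by auto
  have "phi_path (e # \<sigma>) 0 = phi_e e 0 + c * phi_path \<sigma> 0"
    "1 - phi_path (e # \<sigma>) 1 = (1 - phi_e e 1) + c * (1 - phi_path \<sigma> 1)"
    using phi_e_affine(1)[of e "phi_path \<sigma> 0"] phi_e_affine(2)[of e "phi_path \<sigma> 1"] e(2)
    by (simp_all add: phi_path_Cons c_def j_def)
  moreover have "c * phi_path \<sigma> 0 < 1 / (2 * real i)" "c * (1 - phi_path \<sigma> 1) < 1 / (2 * real i)"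
    using mult_strict_left_mono[OF IH0 c(1)] mult_strict_left_mono[OF IH1 c(1)] c(2) by simp_all
  ultimately show ?case
    using phi_e_endpoints[OF e(1)] e(2) by simp
qed

lemma is_wire_dist_half:
  assumes "is_wire n x y"
  shows "\<bar>x - y\<bar> = \<bar>x - 1/2\<bar> + \<bar>y - 1/2\<bar>"
proof -
  obtain \<sigma> where "\<sigma> \<in> E2 n" and xy: "{phi_path \<sigma> 0, phi_path \<sigma> 1} = {x, y}"
    using assms by (auto simp: is_wire_def)
  then have "phi_path \<sigma> 0 < 1/2" "1/2 < phi_path \<sigma> 1"
    using phi_path_endpoints[of 2 \<sigma>] by (auto simp: E2_def)
  with xy show ?thesis by (auto simp: doubleton_eq_iff)
qed

definition mesh2 :: "nat \<Rightarrow> real" where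
  "mesh2 n = 1 / 2 ^ (n + 1)"

lemma mesh2_pos: "0 < mesh2 n"
  by (simp add: mesh2_def)

lemma mesh2_times_power: "2 ^ n * mesh2 n = 1/2"
  by (simp add: mesh2_def)

lemma mu2_eq_mesh2: "mu2 n x = mesh2 n"
  by (simp add: mu2_def mesh2_def)

lemma U2_eq_mesh2: "U2 n x = (if x < 1/2 then {x..<x + mesh2 n} else {x - mesh2 n<..x})"
  by (simp add: U2_def mesh2_def)

lemma mesh2_powr_tendsto_zero:
  assumes "0 < e"
  shows "(\<lambda>n. mesh2 n powr e) \<longlonglongrightarrow> 0"
proof (rule tendsto_zero_powrI)
  have "(\<lambda>n. (1/2) / 2 ^ n :: real) \<longlonglongrightarrow> 0" by (rule LIMSEQ_divide_realpow_zero) simp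
  moreover have "mesh2 = (\<lambda>n. (1/2) / 2 ^ n)" by (simp add: mesh2_def fun_eq_iff)
  ultimately show "mesh2 \<longlonglongrightarrow> 0" by simp
qed (use assms mesh2_pos in \<open>auto intro: always_eventually less_imp_le\<close>)

lemma V2minus_eq_image: "V2minus n = (\<lambda>j. 1/2 - real j * mesh2 n) ` {1..2 ^ n}"
proof (intro set_eqI iffI)
  fix x assume "x \<in> V2minus n"
  then obtain k where k: "k < 2 ^ n" "x = real k / 2 ^ (n + 1)"
    by (auto simp: V2minus_def)
  then have "x = 1/2 - real (2 ^ n - k) * mesh2 n"
    by (simp add: mesh2_def of_nat_diff field_simps)
  moreover have "2 ^ n - k \<in> {1..2 ^ n}" using k by auto
  ultimately show "x \<in> (\<lambda>j. 1/2 - real j * mesh2 n) ` {1..2 ^ n}" by blast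
next
  fix x assume "x \<in> (\<lambda>j. 1/2 - real j * mesh2 n) ` {1..2 ^ n}"
  then obtain j where j: "j \<in> {1..2 ^ n}" "x = 1/2 - real j * mesh2 n" by blast
  then have "x = real (2 ^ n - j) / 2 ^ (n + 1)"
    by (simp add: mesh2_def of_nat_diff field_simps)
  moreover have "2 ^ n - j < 2 ^ n" using j by auto
  ultimately show "x \<in> V2minus n" by (auto simp: V2minus_def)
qed

lemma V2plus_eq_image: "V2plus n = (\<lambda>j. 1/2 + real j * mesh2 n) ` {1..2 ^ n}"
proof -
  have "V2plus n = (\<lambda>x. 1 - x) ` V2minus n"
    by (auto simp: V2plus_def V2minus_def)
  then show ?thesis by (simp add: V2minus_eq_image image_image)
qed

lemma V2_dist_half_bounds:
  assumes "x \<in> V2 n"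
  shows "mesh2 n \<le> \<bar>x - 1/2\<bar>" "\<bar>x - 1/2\<bar> \<le> 1/2"
proof -
  obtain j where j: "j \<in> {1..2 ^ n}" and "\<bar>x - 1/2\<bar> = real j * mesh2 n"
    using assms mesh2_pos[of n] by (auto simp: V2_def V2minus_eq_image V2plus_eq_image)
  moreover have "1 * mesh2 n \<le> real j * mesh2 n" "real j * mesh2 n \<le> 2 ^ n * mesh2 n"
    using j mesh2_pos[of n] by (intro mult_right_mono; simp)+
  ultimately show "mesh2 n \<le> \<bar>x - 1/2\<bar>" "\<bar>x - 1/2\<bar> \<le> 1/2"
    by (simp_all add: mesh2_times_power)
qed

lemma U2_cell:
  assumes "x \<in> V2 n"
  obtains a where "{a<..<a + mesh2 n} \<subseteq> U2 n x" "U2 n x \<subseteq> {a..a + mesh2 n}"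
    "{a..a + mesh2 n} \<subseteq> {0..1}" "x \<in> {a..a + mesh2 n}"
proof (cases "x < 1/2")
  case True
  show ?thesis
  proof (rule that[of x])
    show "{x..x + mesh2 n} \<subseteq> {0..1}"
      using True V2_dist_half_bounds[OF assms] by auto
  qed (use True mesh2_pos[of n] in \<open>auto simp: U2_eq_mesh2\<close>)
next
  case False
  show ?thesis
  proof (rule that[of "x - mesh2 n"])
    show "{x - mesh2 n..x - mesh2 n + mesh2 n} \<subseteq> {0..1}"
      using False V2_dist_half_bounds[OF assms] by auto
  qed (use False mesh2_pos[of n] in \<open>auto simp: U2_eq_mesh2\<close>)
qed

lemma holder_half_01_sqrt:
  assumes "holder_half_01 u"
  obtains C where "0 \<le> C" "\<forall>x\<in>{0..1}. \<forall>y\<in>{0..1}. \<bar>u x - u y\<bar> \<le> C * sqrt \<bar>x - y\<bar>"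
proof -
  obtain C0 where C0: "\<forall>x\<in>{0..1}. \<forall>y\<in>{0..1}. \<bar>u x - u y\<bar> \<le> C0 * \<bar>x - y\<bar> powr (1/2)"
    using assms unfolding holder_half_01_def by blast
  have "\<bar>u x - u y\<bar> \<le> \<bar>C0\<bar> * sqrt \<bar>x - y\<bar>" if "x \<in> {0..1}" "y \<in> {0..1}" for x y
  proof -
    have "\<bar>u x - u y\<bar> \<le> C0 * sqrt \<bar>x - y\<bar>" using C0 that by (simp add: powr_half_sqrt)
    also have "\<dots> \<le> \<bar>C0\<bar> * sqrt \<bar>x - y\<bar>" by (intro mult_right_mono) auto
    finally show ?thesis .
  qed
  then show ?thesis using that[of "\<bar>C0\<bar>"] by simp
qed

lemma avg2_near_value:
  fixes u :: "real \<Rightarrow> real"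
  assumes C: "0 \<le> C" and H: "\<forall>x\<in>{0..1}. \<forall>y\<in>{0..1}. \<bar>u x - u y\<bar> \<le> C * sqrt \<bar>x - y\<bar>"
    and x: "x \<in> V2 n"
  shows "\<bar>avg2 n u x - u x\<bar> \<le> C * sqrt (mesh2 n)"
proof -
  obtain a where cell: "{a<..<a + mesh2 n} \<subseteq> U2 n x" "U2 n x \<subseteq> {a..a + mesh2 n}"
    and sub: "{a..a + mesh2 n} \<subseteq> {0..1}" and xa: "x \<in> {a..a + mesh2 n}"
    using U2_cell[OF x] .
  have "\<bar>u t - u x\<bar> \<le> C * sqrt (mesh2 n)" if "t \<in> {a..a + mesh2 n}" for t
  proof -
    have "\<bar>u t - u x\<bar> \<le> C * sqrt \<bar>t - x\<bar>" using H sub xa that by blast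
    also have "\<dots> \<le> C * sqrt (mesh2 n)" using C that xa by (intro mult_left_mono) auto
    finally show ?thesis .
  qed
  moreover have "continuous_on {a..a + mesh2 n} u"
    using holder_sqrt_continuous_on[OF H] sub by (rule continuous_on_subset)
  ultimately show ?thesis
    unfolding avg2_def using mesh2_pos[of n] cell by (intro average_near_value) auto
qed

lemma avg2_diff_squares_le:
  fixes u :: "real \<Rightarrow> real"
  assumes C: "0 \<le> C" and H: "\<forall>x\<in>{0..1}. \<forall>y\<in>{0..1}. \<bar>u x - u y\<bar> \<le> C * sqrt \<bar>x - y\<bar>"
    and x: "x \<in> V2 n" and y: "y \<in> V2 n" and xy: "mesh2 n \<le> \<bar>x - y\<bar>"
  shows "\<bar>(avg2 n u x - avg2 n u y)\<^sup>2 - (u x - u y)\<^sup>2\<bar> \<le> 8 * C\<^sup>2 * sqrt (mesh2 n) * sqrt \<bar>x - y\<bar>"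
proof -
  have "x \<in> {0..1}" "y \<in> {0..1}"
    using V2_dist_half_bounds(2)[OF x] V2_dist_half_bounds(2)[OF y]
    unfolding atLeastAtMost_iff abs_le_iff by auto
  then have "\<bar>u x - u y\<bar> \<le> C * sqrt \<bar>x - y\<bar>" using H by blast
  then show ?thesis
    using xy mesh2_pos[of n] avg2_near_value[OF C H x] avg2_near_value[OF C H y]
    by (intro abs_diff_squares_le[OF C]) auto
qed

lemma sum_mesh2_multiples_powr_le:
  assumes "0 \<le> \<beta>" "\<beta> \<le> \<gamma>" "1 < \<gamma>"
  shows "(\<Sum>j\<in>{1..2 ^ n}. (real j * mesh2 n) powr -\<beta>) \<le> (\<Sum>j. real j powr -\<gamma>) * mesh2 n powr -\<gamma>"
proof -
  have "(\<Sum>j\<in>{1..2 ^ n}. (real j * mesh2 n) powr -\<beta>) \<le> (\<Sum>j\<in>{1..2 ^ n}. (real j * mesh2 n) powr -\<gamma>)"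
  proof (rule sum_mono)
    fix j :: nat assume "j \<in> {1..2 ^ n}"
    then have "real j * mesh2 n \<le> 2 ^ n * mesh2 n"
      using mesh2_pos[of n] by (intro mult_right_mono) auto
    then show "(real j * mesh2 n) powr -\<beta> \<le> (real j * mesh2 n) powr -\<gamma>"
      using assms mesh2_pos[of n] by (intro powr_mono') (auto simp: mesh2_times_power)
  qed
  also have "\<dots> = (\<Sum>j\<in>{1..2 ^ n}. real j powr -\<gamma>) * mesh2 n powr -\<gamma>"
    using mesh2_pos[of n] by (simp add: powr_mult sum_distrib_right)
  also have "\<dots> \<le> (\<Sum>j. real j powr -\<gamma>) * mesh2 n powr -\<gamma>"
    using assms(3) by (intro mult_right_mono sum_le_suminf) (auto simp: summable_real_powr_iff)
  finally show ?thesis .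
qed

lemma sum_V2_dist_half_powr_le:
  assumes "0 \<le> \<beta>" "\<beta> \<le> \<gamma>" "1 < \<gamma>"
  shows "(\<Sum>x\<in>V2 n. \<bar>x - 1/2\<bar> powr -\<beta>) \<le> 2 * ((\<Sum>j. real j powr -\<gamma>) * mesh2 n powr -\<gamma>)"
proof -
  define g where "g x = \<bar>x - 1/2\<bar> powr -\<beta>" for x :: real
  define B where "B = (\<Sum>j. real j powr -\<gamma>) * mesh2 n powr -\<gamma>"
  have half: "sum g (f ` {1..2 ^ n}) \<le> B" if f: "\<And>j. \<bar>f j - 1/2\<bar> = real j * mesh2 n" for f
  proof -
    have "sum g (f ` {1..2 ^ n}) \<le> sum (g \<circ> f) {1..2 ^ n}"
      by (rule sum_image_le) (auto simp: g_def)
    also have "\<dots> = (\<Sum>j\<in>{1..2 ^ n}. (real j * mesh2 n) powr -\<beta>)"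
      by (simp add: g_def f)
    also have "\<dots> \<le> B"
      unfolding B_def by (rule sum_mesh2_multiples_powr_le[OF assms])
    finally show ?thesis .
  qed
  have "sum g (V2 n) = sum g (V2minus n) + sum g (V2plus n) - sum g (V2minus n \<inter> V2plus n)"
    unfolding V2_def by (rule sum_Un) (simp_all add: V2minus_eq_image V2plus_eq_image)
  moreover have "0 \<le> sum g (V2minus n \<inter> V2plus n)"
    by (rule sum_nonneg) (simp add: g_def)
  moreover have "sum g (V2minus n) \<le> B" "sum g (V2plus n) \<le> B"
    unfolding V2minus_eq_image V2plus_eq_image using mesh2_pos[of n] by (intro half; simp)+
  ultimately show ?thesis unfolding g_def B_def by linarith
qed

lemma energy2_term_le:
  fixes u :: "real \<Rightarrow> real"
  assumes C: "0 \<le> C" and H: "\<forall>x\<in>{0..1}. \<forall>y\<in>{0..1}. \<bar>u x - u y\<bar> \<le> C * sqrt \<bar>x - y\<bar>"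
    and s: "0 \<le> s" and \<Lambda>: "0 \<le> \<Lambda>"
    and j2_le: "is_wire n x y \<Longrightarrow> 0 < j2 r n x y \<and> j2 r n x y \<le> \<Lambda> * \<bar>x - y\<bar> powr (-1 - 2 * s)"
    and x: "x \<in> V2 n" and y: "y \<in> V2 n"
  shows "\<bar>((avg2 n u x - avg2 n u y)\<^sup>2 - (u x - u y)\<^sup>2) * j2 r n x y * mu2 n x * mu2 n y\<bar>
    \<le> 8 * C\<^sup>2 * \<Lambda> * (mesh2 n)\<^sup>2 * sqrt (mesh2 n)
        * (\<bar>x - 1/2\<bar> powr -(1/4 + s) * \<bar>y - 1/2\<bar> powr -(1/4 + s))"
proof (cases "is_wire n x y")
  case False
  then show ?thesis using C \<Lambda> mesh2_pos[of n] by (simp add: j2_def)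
next
  case True
  define h where "h = mesh2 n"
  define d where "d = \<bar>x - y\<bar>"
  have d_nonneg: "0 \<le> d" by (simp add: d_def)
  obtain j_pos: "0 < j2 r n x y" and j_le: "j2 r n x y \<le> \<Lambda> * d powr (-1 - 2 * s)"
    using j2_le[OF True] unfolding d_def by blast
  have h: "0 < h" "h \<le> \<bar>x - 1/2\<bar>" "h \<le> \<bar>y - 1/2\<bar>"
    using mesh2_pos V2_dist_half_bounds[OF x] V2_dist_half_bounds[OF y] by (auto simp: h_def)
  have d: "d = \<bar>x - 1/2\<bar> + \<bar>y - 1/2\<bar>"
    unfolding d_def by (rule is_wire_dist_half[OF True])
  have "h \<le> d" using h d by linarith
  then have sq: "\<bar>(avg2 n u x - avg2 n u y)\<^sup>2 - (u x - u y)\<^sup>2\<bar> \<le> 8 * C\<^sup>2 * sqrt h * sqrt d"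
    unfolding h_def d_def by (rule avg2_diff_squares_le[OF C H x y])
  have "\<bar>((avg2 n u x - avg2 n u y)\<^sup>2 - (u x - u y)\<^sup>2) * j2 r n x y * mu2 n x * mu2 n y\<bar>
      = \<bar>(avg2 n u x - avg2 n u y)\<^sup>2 - (u x - u y)\<^sup>2\<bar> * j2 r n x y * (h * h)"
    using j_pos h(1) by (simp add: mu2_eq_mesh2 h_def abs_mult)
  also have "\<dots> \<le> (8 * C\<^sup>2 * sqrt h * sqrt d) * (\<Lambda> * d powr (-1 - 2 * s)) * (h * h)"
    using sq j_pos j_le h(1) d_nonneg by (intro mult_right_mono mult_mono) auto
  also have "\<dots> = 8 * C\<^sup>2 * \<Lambda> * h\<^sup>2 * sqrt h * (sqrt d * d powr (-1 - 2 * s))"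
    by (simp add: power2_eq_square algebra_simps)
  also have "\<dots> \<le> 8 * C\<^sup>2 * \<Lambda> * h\<^sup>2 * sqrt h
      * (\<bar>x - 1/2\<bar> powr -(1/4 + s) * \<bar>y - 1/2\<bar> powr -(1/4 + s))"
    unfolding d using C \<Lambda> h s by (intro mult_left_mono sqrt_sum_powr_le) auto
  finally show ?thesis unfolding h_def .
qed

lemma energy2_avg2_diff_le:
  fixes u :: "real \<Rightarrow> real"
  assumes C: "0 \<le> C" and H: "\<forall>x\<in>{0..1}. \<forall>y\<in>{0..1}. \<bar>u x - u y\<bar> \<le> C * sqrt \<bar>x - y\<bar>"
    and s: "0 \<le> s" and \<Lambda>: "0 \<le> \<Lambda>"
    and j2_le: "\<And>x y. is_wire n x y \<Longrightarrow> 0 < j2 r n x y \<and> j2 r n x y \<le> \<Lambda> * \<bar>x - y\<bar> powr (-1 - 2 * s)"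
    and \<gamma>: "1/4 + s \<le> \<gamma>" "1 < \<gamma>"
  shows "\<bar>energy2 r n (avg2 n u) - energy2 r n u\<bar>
    \<le> 32 * C\<^sup>2 * \<Lambda> * (\<Sum>j. real j powr -\<gamma>)\<^sup>2 * mesh2 n powr (5/2 - 2 * \<gamma>)"
proof -
  define g where "g x = \<bar>x - 1/2\<bar> powr -(1/4 + s)" for x :: real
  define K where "K = 8 * C\<^sup>2 * \<Lambda> * (mesh2 n)\<^sup>2 * sqrt (mesh2 n)"
  define Z where "Z = (\<Sum>j. real j powr -\<gamma>)"
  have K: "0 \<le> K" using C \<Lambda> mesh2_pos[of n] by (simp add: K_def)
  have "energy2 r n (avg2 n u) - energy2 r n u = (\<Sum>x\<in>V2 n. \<Sum>y\<in>V2 n.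
      ((avg2 n u x - avg2 n u y)\<^sup>2 - (u x - u y)\<^sup>2) * j2 r n x y * mu2 n x * mu2 n y)"
    unfolding energy2_def by (simp add: sum_subtractf[symmetric] left_diff_distrib)
  also have "\<bar>\<dots>\<bar> \<le> K * (sum g (V2 n))\<^sup>2"
    unfolding K_def g_def
    by (rule abs_double_sum_le_square, rule energy2_term_le[OF C H s \<Lambda> j2_le])
  also have "\<dots> \<le> K * (2 * (Z * mesh2 n powr -\<gamma>))\<^sup>2"
    unfolding g_def Z_def using K s \<gamma>
    by (intro mult_left_mono power_mono sum_V2_dist_half_powr_le sum_nonneg) auto
  also have "\<dots> = 32 * C\<^sup>2 * \<Lambda> * Z\<^sup>2 * ((mesh2 n)\<^sup>2 * sqrt (mesh2 n) * (mesh2 n powr -\<gamma>)\<^sup>2)"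
    by (simp add: K_def power2_eq_square)
  finally show ?thesis unfolding power2_sqrt_powr_square[OF mesh2_pos] Z_def .
qed

theorem lemma4p17:
  fixes r :: "edge \<Rightarrow> real" and s :: real and u :: "real \<Rightarrow> real"
  assumes r_pos: "\<forall>e. valid_edge e \<longrightarrow> r e > 0"
    and r_par: "\<forall>i\<ge>1. r (i, 1) = r (i, 2)"
    and s: "0 < s" "s < 1"
    and ub: "upper_bound r s"
    and hu: "holder_half_01 u"
  shows "\<forall>L :: ereal.
           ((\<lambda>n. ereal (energy2 r n (avg2 n u))) \<longlonglongrightarrow> L) \<longleftrightarrow>
           ((\<lambda>n. ereal (energy2 r n u)) \<longlonglongrightarrow> L)"
proof (rule tendsto_ereal_iff_of_diff_null)
  obtain \<Lambda> where \<Lambda>: "0 < \<Lambda>" and j2_le: "\<And>n x y. is_wire n x y \<Longrightarrow>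
      0 < j2 r n x y \<and> j2 r n x y \<le> \<Lambda> * \<bar>x - y\<bar> powr (-1 - 2 * s)"
    using ub unfolding upper_bound_def by blast
  obtain C where C: "0 \<le> C" and H: "\<forall>x\<in>{0..1}. \<forall>y\<in>{0..1}. \<bar>u x - u y\<bar> \<le> C * sqrt \<bar>x - y\<bar>"
    using holder_half_01_sqrt[OF hu] .
  \<comment> \<open>The weights r enter only through the upper bound on j2.\<close>
  define \<gamma> where "\<gamma> = max (1/4 + s) (9/8)"
  have \<gamma>: "1/4 + s \<le> \<gamma>" "1 < \<gamma>" "0 < 5/2 - 2 * \<gamma>"
    using s by (auto simp: \<gamma>_def max_def)
  have "(\<lambda>n. 32 * C\<^sup>2 * \<Lambda> * (\<Sum>j. real j powr -\<gamma>)\<^sup>2 * mesh2 n powr (5/2 - 2 * \<gamma>)) \<longlonglongrightarrow> 0"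
    by (intro tendsto_mult_right_zero mesh2_powr_tendsto_zero \<gamma>(3))
  moreover have "\<forall>\<^sub>F n in sequentially. norm (energy2 r n (avg2 n u) - energy2 r n u)
      \<le> 32 * C\<^sup>2 * \<Lambda> * (\<Sum>j. real j powr -\<gamma>)\<^sup>2 * mesh2 n powr (5/2 - 2 * \<gamma>)"
    using energy2_avg2_diff_le[OF C H _ _ j2_le \<gamma>(1,2)] s \<Lambda> by (intro always_eventually allI) simp
  ultimately show "(\<lambda>n. energy2 r n (avg2 n u) - energy2 r n u) \<longlonglongrightarrow> 0"
    by (rule Lim_null_comparison[rotated])
qed

end
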